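(* Let $k$ be a positive integer. For all positive integers $m,n$, $R_k^m\cong R_k^n$ if and only if $m\equiv n\pmod k$.
   Context: $\mathbb{N}=\{1,2,3,\dots\}$. $R$ denotes the ring of all $\mathbb{N}\times\mathbb{N}$ integer matrices with only finitely many nonzero entries in each row and each column, with entrywise addition and multiplication $(AB)_{i,j}=\sum_{l\ge1}a_{i,l}b_{l,j}$. Fix a positive integer $k$. Partition $\mathbb{N}$ into consecutive blocks $J_1=\{1\}$ and, for $m\ge2$, $J_m=\{2+k(m-2),\dots,1+k(m-1)\}$. For $A\in R$, the block $A^{m,n}$ is the submatrix with rows indexed by $J_m$ and columns by $J_n$. $R_k$ is the subring of $A\in R$ such that for all but finitely many pairs $(m,n)$ with $m,n\ge2$, $A^{m,n}=cI_k$ for some integer $c$. For a ring $S$, $S^n$ is the free left $S$-module of $n$-tuples with componentwise operations; $S^m\cong S^n$ means there is a bijective left-$S$-linear map $S^m\to S^n$, equivalently there exist $X\in M_{m\times n}(S)$, $Y\in M_{n\times m}(S)$ with $XY=I_m$, $YX=I_n$. *)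

theory Defs
  imports Main
begin

text \<open>Integer N x N matrices are modelled as functions nat => nat => int, using the
  positive indices 1,2,3,...; entries with a zero index are required to vanish,
  so that equality of ring elements is equality of functions.\<close>

type_synonym imat = "nat \<Rightarrow> nat \<Rightarrow> int"

definition inR :: "imat \<Rightarrow> bool" where
  "inR A \<longleftrightarrow> (\<forall>i j. (i = 0 \<or> j = 0) \<longrightarrow> A i j = 0)
      \<and> (\<forall>i. finite {j. A i j \<noteq> 0}) \<and> (\<forall>j. finite {i. A i j \<noteq> 0})"

definition mmul :: "imat \<Rightarrow> imat \<Rightarrow> imat" where
  "mmul A B = (\<lambda>i j. \<Sum>l\<in>{l. 1 \<le> l \<and> A i l \<noteq> 0}. A i l * B l j)"

definition mone :: imat where
  "mone = (\<lambda>i j. if i = j \<and> 1 \<le> i then 1 else 0)"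

definition mzero :: imat where
  "mzero = (\<lambda>i j. 0)"

text \<open>The block A^{m,n} (m,n >= 2) equals c I_k: rows J_m = {2+k(m-2)+a | a<k},
  columns J_n = {2+k(n-2)+b | b<k}.\<close>
definition block_scalar :: "nat \<Rightarrow> imat \<Rightarrow> nat \<Rightarrow> nat \<Rightarrow> bool" where
  "block_scalar k A m n \<longleftrightarrow> (\<exists>c::int. \<forall>a<k. \<forall>b<k.
      A (2 + k * (m - 2) + a) (2 + k * (n - 2) + b) = (if a = b then c else 0))"

definition inRk :: "nat \<Rightarrow> imat \<Rightarrow> bool" where
  "inRk k A \<longleftrightarrow> inR A \<and>
     finite {(m, n). 2 \<le> m \<and> 2 \<le> n \<and> \<not> block_scalar k A m n}"

text \<open>R_k^m is isomorphic to R_k^n as left R_k-modules: there are X in M_{m x n}(R_k),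
  Y in M_{n x m}(R_k) with XY = I_m and YX = I_n (matrix indices 0-based here).\<close>
definition free_iso :: "nat \<Rightarrow> nat \<Rightarrow> nat \<Rightarrow> bool" where
  "free_iso k m n \<longleftrightarrow> (\<exists>X Y :: nat \<Rightarrow> nat \<Rightarrow> imat.
      (\<forall>i<m. \<forall>j<n. inRk k (X i j)) \<and> (\<forall>i<n. \<forall>j<m. inRk k (Y i j)) \<and>
      (\<forall>i<m. \<forall>j<m. (\<lambda>a b. \<Sum>l<n. mmul (X i l) (Y l j) a b) = (if i = j then mone else mzero)) \<and>
      (\<forall>i<n. \<forall>j<n. (\<lambda>a b. \<Sum>l<m. mmul (Y i l) (X l j) a b) = (if i = j then mone else mzero)))"

end

theory Submission
  imports Defs
begin

text \<open>If \<open>n = m + k t\<close>, a bijection between the coordinate sets of \<open>m\<close> and of \<open>n\<close> copies of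
  \<open>\<nat>\<^sub>+\<close> that moves whole blocks \<open>J\<^sub>p\<close> in order yields mutually inverse permutation
  matrices with entries in \<open>R\<^sub>k\<close>.
  Conversely, for \<open>A, B \<in> R\<^sub>k\<close> the traces of \<open>AB\<close> and \<open>BA\<close> over the first \<open>1 + k N\<close>
  coordinates agree modulo \<open>k\<close> once \<open>N\<close> is large. Applied to \<open>XY = I\<^sub>m\<close> and
  \<open>YX = I\<^sub>n\<close> this gives \<open>m (1 + k N) \<equiv> n (1 + k N) (mod k)\<close>, i.e. \<open>m \<equiv> n (mod k)\<close>.\<close>

lemma block_index_eq_iff:
  fixes k x y s s' :: nat
  assumes "s < k" "s' < k"
  shows "k * x + s = k * y + s' \<longleftrightarrow> x = y \<and> s = s'"
proof
  assume eq: "k * x + s = k * y + s'"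
  have "x = (k * x + s) div k" "y = (k * y + s') div k"
    "s = (k * x + s) mod k" "s' = (k * y + s') mod k"
    using assms by simp_all
  then show "x = y \<and> s = s'" using eq by metis
qed simp

text \<open>A bijection between the index sets \<open>{..<m} \<times> \<nat>\<^sub>+\<close> and \<open>{..<n} \<times> \<nat>\<^sub>+\<close>
  (copy \<open>i\<close>, coordinate \<open>a\<close>) is given by a map \<open>g\<close> with inverse \<open>h\<close>;
  \<open>perm_block g i l\<close> is the \<open>(i, l)\<close> entry of the corresponding
  \<open>m \<times> n\<close> permutation matrix over \<open>R\<close>.\<close>

definition inverse_on_copies ::
    "nat \<Rightarrow> nat \<Rightarrow> (nat \<times> nat \<Rightarrow> nat \<times> nat) \<Rightarrow> (nat \<times> nat \<Rightarrow> nat \<times> nat) \<Rightarrow> bool" where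
  "inverse_on_copies m n g h \<longleftrightarrow>
     (\<forall>i<m. \<forall>a\<ge>1. fst (g (i, a)) < n \<and> 1 \<le> snd (g (i, a)) \<and> h (g (i, a)) = (i, a))"

definition perm_block :: "(nat \<times> nat \<Rightarrow> nat \<times> nat) \<Rightarrow> nat \<Rightarrow> nat \<Rightarrow> imat" where
  "perm_block g i l = (\<lambda>a b. if 1 \<le> a \<and> 1 \<le> b \<and> g (i, a) = (l, b) then 1 else 0)"

definition respects_blocks :: "nat \<Rightarrow> (nat \<times> nat \<Rightarrow> nat \<times> nat) \<Rightarrow> nat \<Rightarrow> bool" where
  "respects_blocks k g i \<longleftrightarrow> (\<forall>p\<ge>2. (\<forall>s<k. snd (g (i, 2 + k * (p - 2) + s)) = 1) \<or>
     (\<exists>L Q. 2 \<le> Q \<and> (\<forall>s<k. g (i, 2 + k * (p - 2) + s) = (L, 2 + k * (Q - 2) + s))))"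

lemma block_scalar_perm_block:
  assumes "respects_blocks k g i" "2 \<le> p" "2 \<le> q"
  shows "block_scalar k (perm_block g i l) p q"
proof -
  consider "\<forall>s<k. snd (g (i, 2 + k * (p - 2) + s)) = 1"
    | L Q where "2 \<le> Q" "\<forall>s<k. g (i, 2 + k * (p - 2) + s) = (L, 2 + k * (Q - 2) + s)"
    using assms(1,2) unfolding respects_blocks_def by blast
  then show ?thesis
  proof cases
    case 1
    then show ?thesis unfolding block_scalar_def
      by (intro exI[of _ 0]) (auto simp: perm_block_def)
  next
    case (2 L Q)
    have "k * (Q - 2) + a = k * (q - 2) + b \<longleftrightarrow> Q = q \<and> a = b" if "a < k" "b < k" for a b
      using block_index_eq_iff[OF that] \<open>2 \<le> Q\<close> \<open>2 \<le> q\<close> by auto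
    then show ?thesis unfolding block_scalar_def using 2
      by (intro exI[of _ "if L = l \<and> Q = q then 1 else 0"]) (auto simp: perm_block_def)
  qed
qed

lemma perm_block_inRk:
  assumes inv: "inverse_on_copies m n g h" and "i < m"
    and blocks: "respects_blocks k g i"
  shows "inRk k (perm_block g i l)"
proof -
  have rows: "finite {b. perm_block g i l a b \<noteq> 0}" for a
    by (rule finite_subset[of _ "{snd (g (i, a))}"]) (auto simp: perm_block_def)
  have "{a. perm_block g i l a b \<noteq> 0} \<subseteq> {snd (h (l, b))}" for b
    using inv \<open>i < m\<close> unfolding inverse_on_copies_def perm_block_def
    by (auto split: if_splits) (metis snd_conv)
  then have cols: "finite {a. perm_block g i l a b \<noteq> 0}" for b
    by (rule finite_subset) simp
  have "inR (perm_block g i l)"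
    unfolding inR_def using rows cols by (auto simp: perm_block_def)
  moreover have "{(p, q). 2 \<le> p \<and> 2 \<le> q \<and> \<not> block_scalar k (perm_block g i l) p q} = {}"
    using block_scalar_perm_block[OF blocks] by auto
  ultimately show ?thesis unfolding inRk_def by (metis (no_types) finite.emptyI)
qed

lemma mmul_perm_block:
  "mmul (perm_block g i l) B a b =
     (if 1 \<le> a \<and> fst (g (i, a)) = l \<and> 1 \<le> snd (g (i, a)) then B (snd (g (i, a))) b else 0)"
proof -
  have "{c. 1 \<le> c \<and> perm_block g i l a c \<noteq> 0} =
      (if 1 \<le> a \<and> fst (g (i, a)) = l \<and> 1 \<le> snd (g (i, a)) then {snd (g (i, a))} else {})"
    by (auto simp: perm_block_def prod_eq_iff)
  then show ?thesis unfolding mmul_def by (auto simp: perm_block_def prod_eq_iff)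
qed

lemma perm_block_product:
  assumes inv: "inverse_on_copies m n g h" and "i < m" "j < m"
  shows "(\<lambda>a b. \<Sum>l<n. mmul (perm_block g i l) (perm_block h l j) a b) =
    (if i = j then mone else mzero)"
proof (intro ext)
  fix a b
  have "(\<Sum>l<n. mmul (perm_block g i l) (perm_block h l j) a b) =
      (\<Sum>l<n. if l = fst (g (i, a)) then
         (if 1 \<le> a \<and> 1 \<le> snd (g (i, a)) then perm_block h l j (snd (g (i, a))) b else 0) else 0)"
    by (rule sum.cong) (auto simp: mmul_perm_block)
  also have "\<dots> = (if 1 \<le> a then perm_block h (fst (g (i, a))) j (snd (g (i, a))) b else 0)"
    using inv \<open>i < m\<close> by (auto simp: inverse_on_copies_def sum.delta')
  also have "\<dots> = (if i = j then mone else mzero) a b"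
    using inv \<open>i < m\<close> by (auto simp: inverse_on_copies_def perm_block_def mone_def mzero_def)
  finally show "(\<Sum>l<n. mmul (perm_block g i l) (perm_block h l j) a b) =
    (if i = j then mone else mzero) a b" .
qed

lemma free_iso_of_block_bijection:
  assumes "inverse_on_copies m n g h" "inverse_on_copies n m h g"
    and "\<forall>i<m. respects_blocks k g i" "\<forall>l<n. respects_blocks k h l"
  shows "free_iso k m n"
proof -
  have "\<forall>i<m. \<forall>j<n. inRk k (perm_block g i j)" "\<forall>i<n. \<forall>j<m. inRk k (perm_block h i j)"
    using perm_block_inRk assms by blast+
  moreover have "\<forall>i<m. \<forall>j<m. (\<lambda>a b. \<Sum>l<n. mmul (perm_block g i l) (perm_block h l j) a b) =
      (if i = j then mone else mzero)"
    "\<forall>i<n. \<forall>j<n. (\<lambda>a b. \<Sum>l<m. mmul (perm_block h i l) (perm_block g l j) a b) =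
      (if i = j then mone else mzero)"
    using perm_block_product assms(1,2) by blast+
  ultimately show ?thesis unfolding free_iso_def by blast
qed

text \<open>The bijection behind \<open>R\<^sub>k\<^sup>m \<cong> R\<^sub>k\<^sup>m\<^sup>+\<^sup>k\<^sup>t\<close>. Copies \<open>1, \<dots>, m - 1\<close> and the first
  coordinate of copy \<open>0\<close> stay put. The first \<open>t\<close> blocks of copy \<open>0\<close> (\<open>k t\<close> coordinates)
  become the first coordinates of the new copies \<open>m, \<dots>, m + k t - 1\<close>; its remaining blocks,
  numbered \<open>r = (1 + k t) u + v\<close> with \<open>v \<le> k t\<close>, are dealt out cyclically: block \<open>r\<close> goes to
  block \<open>u\<close> of copy \<open>0\<close> if \<open>v = 0\<close>, and of copy \<open>m + v - 1\<close> otherwise.\<close>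

definition spread :: "nat \<Rightarrow> nat \<Rightarrow> nat \<Rightarrow> nat \<times> nat \<Rightarrow> nat \<times> nat" where
  "spread k m t x = (let i = fst x; a = snd x in
     if i \<noteq> 0 \<or> a \<le> 1 then (i, a)
     else if a - 2 < k * t then (m + (a - 2), 1)
     else (let r = (a - 2) div k - t; s = (a - 2) mod k;
               u = r div (1 + k * t); v = r mod (1 + k * t) in
       (if v = 0 then 0 else m + v - 1, 2 + k * u + s)))"

definition gather :: "nat \<Rightarrow> nat \<Rightarrow> nat \<Rightarrow> nat \<times> nat \<Rightarrow> nat \<times> nat" where
  "gather k m t x = (let l = fst x; b = snd x in
     if (0 < l \<and> l < m) \<or> (b \<le> 1 \<and> l = 0) then (l, b)
     else if b \<le> 1 then (0, 2 + (l - m))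
     else (let u = (b - 2) div k; s = (b - 2) mod k; v = (if l = 0 then 0 else l - m + 1) in
       (0, 2 + k * (t + (1 + k * t) * u + v) + s)))"

lemma inverse_on_copies_spread:
  assumes k: "0 < k" and m: "0 < m"
  shows "inverse_on_copies m (m + k * t) (spread k m t) (gather k m t)"
  unfolding inverse_on_copies_def
proof (intro allI impI)
  fix i a :: nat assume i: "i < m" and a: "1 \<le> a"
  show "fst (spread k m t (i, a)) < m + k * t \<and> 1 \<le> snd (spread k m t (i, a)) \<and>
      gather k m t (spread k m t (i, a)) = (i, a)"
  proof (cases "i \<noteq> 0 \<or> a \<le> 1 \<or> a - 2 < k * t")
    case True
    then show ?thesis using i a m by (auto simp: spread_def gather_def Let_def)
  next
    case False
    then have i0: "i = 0" and a2: "2 \<le> a" and big: "\<not> a - 2 < k * t" by auto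
    define r where "r = (a - 2) div k - t"
    define s where "s = (a - 2) mod k"
    define u where "u = r div (1 + k * t)"
    define v where "v = r mod (1 + k * t)"
    have spread_eq: "spread k m t (i, a) = (if v = 0 then 0 else m + v - 1, 2 + k * u + s)"
      using i0 a2 big by (simp add: spread_def Let_def r_def s_def u_def v_def)
    have "t \<le> (a - 2) div k"
      using big k by (simp add: less_eq_div_iff_mult_less_eq mult.commute)
    moreover have "(1 + k * t) * u + v = r"
      unfolding u_def v_def by (metis div_mult_mod_eq mult.commute)
    ultimately have "t + (1 + k * t) * u + v = (a - 2) div k" unfolding r_def by simp
    then have a_eq: "2 + k * (t + (1 + k * t) * u + v) + s = a"
      using a2 unfolding s_def by simp
    have us: "(k * u + s) div k = u" "(k * u + s) mod k = s"
      using k unfolding s_def by auto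
    have "v < 1 + k * t" unfolding v_def by simp
    moreover have "m + v - 1 - m + 1 = v" if "v \<noteq> 0" using that by simp
    ultimately show ?thesis
      using spread_eq i0 m us a_eq by (cases "v = 0") (auto simp: gather_def Let_def)
  qed
qed

lemma inverse_on_copies_gather:
  assumes k: "0 < k" and m: "0 < m"
  shows "inverse_on_copies (m + k * t) m (gather k m t) (spread k m t)"
  unfolding inverse_on_copies_def
proof (intro allI impI)
  fix l b :: nat assume l: "l < m + k * t" and b: "1 \<le> b"
  show "fst (gather k m t (l, b)) < m \<and> 1 \<le> snd (gather k m t (l, b)) \<and>
      spread k m t (gather k m t (l, b)) = (l, b)"
  proof (cases "(0 < l \<and> l < m) \<or> (b \<le> 1 \<and> l = 0)")
    case True
    then show ?thesis using m b by (auto simp: spread_def gather_def Let_def)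
  next
    case outer: False
    show ?thesis
    proof (cases "b \<le> 1")
      case True
      with outer b have "m \<le> l" "b = 1" by auto
      then show ?thesis using l m by (auto simp: spread_def gather_def Let_def)
    next
      case False
      define u where "u = (b - 2) div k"
      define s where "s = (b - 2) mod k"
      define v where "v = (if l = 0 then 0 else l - m + 1)"
      define a where "a = 2 + k * (t + (1 + k * t) * u + v) + s"
      have gather_eq: "gather k m t (l, b) = (0, a)"
        using outer False by (simp add: gather_def Let_def u_def s_def v_def a_def)
      have "(c * u + v) div c = u \<and> (c * u + v) mod c = v" if "v < c" for c :: nat
        using that by simp
      moreover have "v < 1 + k * t" using l outer unfolding v_def by auto
      ultimately have uv: "((1 + k * t) * u + v) div (1 + k * t) = u"
        "((1 + k * t) * u + v) mod (1 + k * t) = v"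
        by blast+
      have "s < k" using k unfolding s_def by simp
      then have "(a - 2) div k = t + (1 + k * t) * u + v" "(a - 2) mod k = s"
        unfolding a_def by simp_all
      moreover have "\<not> a - 2 < k * t" unfolding a_def by (simp add: algebra_simps)
      ultimately have "spread k m t (0, a) = (if v = 0 then 0 else m + v - 1, 2 + k * u + s)"
        using uv by (simp add: spread_def Let_def a_def del: One_nat_def)
      moreover have "(if v = 0 then 0 else m + v - 1) = l" "2 + k * u + s = b"
        using outer m False unfolding v_def u_def s_def by auto
      ultimately show ?thesis using gather_eq m by (simp add: a_def)
    qed
  qed
qed

lemma respects_blocks_spread:
  assumes k: "0 < k"
  shows "respects_blocks k (spread k m t) i"
  unfolding respects_blocks_def
proof (intro allI impI)
  fix p :: nat assume p: "2 \<le> p"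
  have qs: "(k * (p - 2) + s) div k = p - 2" "(k * (p - 2) + s) mod k = s" if "s < k" for s
    using that k by simp_all
  consider "i \<noteq> 0" | "i = 0" "p - 2 < t" | "i = 0" "\<not> p - 2 < t" by blast
  then show "(\<forall>s<k. snd (spread k m t (i, 2 + k * (p - 2) + s)) = 1) \<or>
     (\<exists>L Q. 2 \<le> Q \<and> (\<forall>s<k. spread k m t (i, 2 + k * (p - 2) + s) = (L, 2 + k * (Q - 2) + s)))"
  proof cases
    case 1
    then show ?thesis by (intro disjI2 exI[of _ i] exI[of _ p]) (simp add: p spread_def)
  next
    case 2
    have "k * (p - 2) + s < k * t" if "s < k" for s
    proof -
      have "k * (p - 2) + s < k * Suc (p - 2)" using that by simp
      also have "\<dots> \<le> k * t" using \<open>p - 2 < t\<close> by (intro mult_le_mono2) simp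
      finally show ?thesis .
    qed
    then show ?thesis using \<open>i = 0\<close> by (simp add: spread_def)
  next
    case 3
    define u where "u = (p - 2 - t) div (1 + k * t)"
    define v where "v = (p - 2 - t) mod (1 + k * t)"
    have "spread k m t (i, 2 + k * (p - 2) + s) =
        (if v = 0 then 0 else m + v - 1, 2 + k * (2 + u - 2) + s)" if "s < k" for s
    proof -
      have "\<not> k * (p - 2) + s < k * t"
        using mult_le_mono2[of t "p - 2" k] \<open>\<not> p - 2 < t\<close> by linarith
      then show ?thesis using \<open>i = 0\<close> qs[OF that]
        by (simp add: spread_def Let_def u_def v_def del: One_nat_def)
    qed
    then show ?thesis
      by (intro disjI2 exI[of _ "if v = 0 then 0 else m + v - 1"] exI[of _ "2 + u"]) simp
  qed
qed

lemma respects_blocks_gather: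
  assumes k: "0 < k"
  shows "respects_blocks k (gather k m t) l"
  unfolding respects_blocks_def
proof (intro allI impI)
  fix p :: nat assume p: "2 \<le> p"
  have qs: "(k * (p - 2) + s) div k = p - 2" "(k * (p - 2) + s) mod k = s" if "s < k" for s
    using that k by simp_all
  show "(\<forall>s<k. snd (gather k m t (l, 2 + k * (p - 2) + s)) = 1) \<or>
     (\<exists>L Q. 2 \<le> Q \<and> (\<forall>s<k. gather k m t (l, 2 + k * (p - 2) + s) = (L, 2 + k * (Q - 2) + s)))"
  proof (cases "0 < l \<and> l < m")
    case True
    then show ?thesis by (intro disjI2 exI[of _ l] exI[of _ p]) (simp add: p gather_def)
  next
    case False
    define Q where "Q = 2 + (t + (1 + k * t) * (p - 2) + (if l = 0 then 0 else l - m + 1))"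
    have "gather k m t (l, 2 + k * (p - 2) + s) = (0, 2 + k * (Q - 2) + s)" if "s < k" for s
      using False qs[OF that] by (simp add: gather_def Let_def Q_def del: One_nat_def)
    then show ?thesis by (intro disjI2 exI[of _ 0] exI[of _ Q]) (simp add: Q_def)
  qed
qed

lemma free_iso_add_multiple:
  assumes "0 < k" "0 < m"
  shows "free_iso k m (m + k * t)"
  by (rule free_iso_of_block_bijection[where g = "spread k m t" and h = "gather k m t"])
    (simp_all add: assms inverse_on_copies_spread inverse_on_copies_gather
      respects_blocks_spread respects_blocks_gather)

lemma free_iso_sym: "free_iso k m n \<Longrightarrow> free_iso k n m"
  unfolding free_iso_def by blast

lemma free_iso_of_mod_eq:
  assumes "0 < k" "0 < m" "0 < n" "m mod k = n mod k"
  shows "free_iso k m n"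
proof -
  have "free_iso k a b" if "0 < a" "a \<le> b" "a mod k = b mod k" for a b
  proof -
    have "k dvd b - a" using that mod_eq_dvd_iff_nat[of a b k] by simp
    then obtain t where "b = a + k * t" using \<open>a \<le> b\<close>
      by (metis dvdE le_add_diff_inverse)
    then show ?thesis using free_iso_add_multiple assms(1) that(1) by simp
  qed
  then show ?thesis using assms free_iso_sym by (cases "m \<le> n") auto
qed

definition partial_trace :: "nat \<Rightarrow> imat \<Rightarrow> int" where
  "partial_trace M A = (\<Sum>a\<in>{1..<M}. A a a)"

text \<open>The cut at \<open>2 + k N\<close> lies right after \<open>J\<^sub>N\<^sub>+\<^sub>1\<close>. The first row belongs to no
  block and is controlled separately.\<close>

definition scalar_across_cut :: "nat \<Rightarrow> imat \<Rightarrow> nat \<Rightarrow> bool" where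
  "scalar_across_cut k A N \<longleftrightarrow>
     (\<forall>p q. 2 \<le> p \<longrightarrow> p \<le> N + 1 \<longrightarrow> N + 1 < q \<longrightarrow>
        block_scalar k A p q \<and> block_scalar k A q p) \<and>
     (\<forall>l\<ge>2 + k * N. A 1 l = 0)"

lemma eventually_scalar_across_cut:
  assumes k: "0 < k" and A: "inRk k A"
  shows "eventually (scalar_across_cut k A) sequentially"
proof -
  let ?E = "{(p, q). 2 \<le> p \<and> 2 \<le> q \<and> \<not> block_scalar k A p q}"
  have "finite (fst ` ?E \<union> snd ` ?E)" using A unfolding inRk_def by simp
  then obtain P where P: "\<forall>x\<in>fst ` ?E \<union> snd ` ?E. x < P"
    using finite_nat_set_iff_bounded by blast
  have "finite {l. A 1 l \<noteq> 0}" using A unfolding inRk_def inR_def by simp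
  then obtain P' where P': "\<forall>l\<in>{l. A 1 l \<noteq> 0}. l < P'"
    using finite_nat_set_iff_bounded by blast
  have "scalar_across_cut k A N" if N: "P + P' \<le> N" for N
  proof -
    have "block_scalar k A p q \<and> block_scalar k A q p" if "2 \<le> p" "N + 1 < q" for p q
    proof -
      have "\<not> q < P" using N that by linarith
      then have "q \<notin> fst ` ?E" "q \<notin> snd ` ?E" using P by blast+
      moreover have "q \<in> snd ` ?E" if "(p, q) \<in> ?E" using that by (rule image_eqI[rotated]) simp
      moreover have "q \<in> fst ` ?E" if "(q, p) \<in> ?E" using that by (rule image_eqI[rotated]) simp
      ultimately show ?thesis using that by auto
    qed
    moreover have "A 1 l = 0" if "2 + k * N \<le> l" for l
    proof -
      have "P' \<le> l" using N that k mult_le_mono1[of 1 k N] by linarith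
      then show ?thesis using P' by (auto simp: not_less[symmetric])
    qed
    ultimately show ?thesis unfolding scalar_across_cut_def by simp
  qed
  then show ?thesis unfolding eventually_sequentially by blast
qed

lemma sum_atLeastLessThan_blocks:
  fixes f :: "nat \<Rightarrow> 'a :: comm_monoid_add"
  shows "(\<Sum>a\<in>{b..<b + k * N}. f a) = (\<Sum>p<N. \<Sum>s<k. f (b + k * p + s))"
proof (induction N)
  case (Suc N)
  have "{b..<b + k * Suc N} = {b..<b + k * N} \<union> {b + k * N..<b + k * N + k}"
    by (auto simp: algebra_simps)
  moreover have "(\<Sum>a\<in>{b + k * N..<b + k * N + k}. f a) = (\<Sum>s<k. f (b + k * N + s))"
    using sum.shift_bounds_nat_ivl[of f 0 "b + k * N" k]
    by (simp add: atLeast0LessThan add.commute)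
  ultimately have "(\<Sum>a\<in>{b..<b + k * Suc N}. f a) =
      (\<Sum>a\<in>{b..<b + k * N}. f a) + (\<Sum>s<k. f (b + k * N + s))"
    by (simp add: sum.union_disjoint ivl_disj_int)
  then show ?case using Suc by simp
qed simp

lemma block_product_trace_dvd:
  assumes "block_scalar k A p q" "block_scalar k B q p"
  shows "int k dvd (\<Sum>s<k. \<Sum>s'<k.
    A (2 + k * (p - 2) + s) (2 + k * (q - 2) + s') * B (2 + k * (q - 2) + s') (2 + k * (p - 2) + s))"
proof -
  obtain c d where
    c: "\<forall>s<k. \<forall>s'<k. A (2 + k * (p - 2) + s) (2 + k * (q - 2) + s') = (if s = s' then c else 0)" and
    d: "\<forall>s'<k. \<forall>s<k. B (2 + k * (q - 2) + s') (2 + k * (p - 2) + s) = (if s' = s then d else 0)"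
    using assms unfolding block_scalar_def by blast
  have "(\<Sum>s<k. \<Sum>s'<k.
      A (2 + k * (p - 2) + s) (2 + k * (q - 2) + s') * B (2 + k * (q - 2) + s') (2 + k * (p - 2) + s))
      = (\<Sum>s<k. \<Sum>s'<k. if s' = s then c * d else 0)"
    using c d by (intro sum.cong) auto
  also have "\<dots> = int k * (c * d)" by simp
  finally show ?thesis by simp
qed

lemma cut_cross_sum_dvd:
  assumes A: "scalar_across_cut k A N" and B: "scalar_across_cut k B N" and "N \<le> Q"
  shows "int k dvd (\<Sum>a\<in>{1..<2 + k * N}. \<Sum>l\<in>{2 + k * N..<2 + k * Q}. A a l * B l a)"
proof -
  define f where "f a = (\<Sum>l\<in>{2 + k * N..<2 + k * Q}. A a l * B l a)" for a
  have "f 1 = 0" unfolding f_def using A unfolding scalar_across_cut_def by simp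
  then have "(\<Sum>a\<in>{1..<2 + k * N}. f a) = (\<Sum>a\<in>{2..<2 + k * N}. f a)"
    by (subst sum.atLeast_Suc_lessThan) (simp_all add: numeral_2_eq_2)
  also have "\<dots> = (\<Sum>p<N. \<Sum>q<Q - N. \<Sum>s<k. \<Sum>s'<k.
      A (2 + k * p + s) (2 + k * (N + q) + s') * B (2 + k * (N + q) + s') (2 + k * p + s))"
  proof -
    have Q: "2 + k * Q = (2 + k * N) + k * (Q - N)" using \<open>N \<le> Q\<close> by (simp add: algebra_simps)
    have f: "f a = (\<Sum>q<Q - N. \<Sum>s'<k. A a (2 + k * (N + q) + s') * B (2 + k * (N + q) + s') a)"
      for a unfolding f_def Q sum_atLeastLessThan_blocks by (simp add: distrib_left add.assoc)
    have "(\<Sum>a\<in>{2..<2 + k * N}. f a) = (\<Sum>p<N. \<Sum>s<k. f (2 + k * p + s))"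
      by (rule sum_atLeastLessThan_blocks)
    also have "\<dots> = (\<Sum>p<N. \<Sum>q<Q - N. \<Sum>s<k. \<Sum>s'<k.
        A (2 + k * p + s) (2 + k * (N + q) + s') * B (2 + k * (N + q) + s') (2 + k * p + s))"
      unfolding f by (intro sum.cong refl sum.swap)
    finally show ?thesis .
  qed
  also have "int k dvd \<dots>"
  proof (rule dvd_sum, rule dvd_sum)
    fix p q assume "p \<in> {..<N}" "q \<in> {..<Q - N}"
    then have "block_scalar k A (p + 2) (N + q + 2)" "block_scalar k B (N + q + 2) (p + 2)"
      using A B unfolding scalar_across_cut_def by auto
    from block_product_trace_dvd[OF this] show "int k dvd (\<Sum>s<k. \<Sum>s'<k.
        A (2 + k * p + s) (2 + k * (N + q) + s') * B (2 + k * (N + q) + s') (2 + k * p + s))"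
      by (simp add: add.commute)
  qed
  finally show ?thesis unfolding f_def .
qed

lemma mmul_eq_sum_below:
  assumes "\<forall>l\<ge>U. A a l = 0"
  shows "mmul A B a c = (\<Sum>l\<in>{1..<U}. A a l * B l c)"
  unfolding mmul_def
proof (rule sum.mono_neutral_left)
  show "{l. 1 \<le> l \<and> A a l \<noteq> 0} \<subseteq> {1..<U}" using assms by (auto simp: not_less[symmetric])
qed auto

lemma inR_rows_bounded:
  assumes "inR A"
  shows "\<exists>U. \<forall>a<M. \<forall>l\<ge>U. A a l = 0"
proof -
  have "finite (\<Union>a<M. {l. A a l \<noteq> 0})" using assms unfolding inR_def by auto
  then obtain U where "\<forall>l\<in>(\<Union>a<M. {l. A a l \<noteq> 0}). l < U"
    using finite_nat_set_iff_bounded by blast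
  then show ?thesis by (auto simp: not_less[symmetric])
qed

lemma partial_trace_mmul_split:
  assumes "\<forall>a<M. \<forall>l\<ge>T. A a l = 0" and "1 \<le> M" "M \<le> T"
  shows "partial_trace M (mmul A B) =
    (\<Sum>a\<in>{1..<M}. \<Sum>l\<in>{1..<M}. A a l * B l a) + (\<Sum>a\<in>{1..<M}. \<Sum>l\<in>{M..<T}. A a l * B l a)"
proof -
  have "mmul A B a a = (\<Sum>l\<in>{1..<M}. A a l * B l a) + (\<Sum>l\<in>{M..<T}. A a l * B l a)"
    if "a \<in> {1..<M}" for a
    using that assms mmul_eq_sum_below[of T A a B a] by (simp add: sum.atLeastLessThan_concat)
  then show ?thesis unfolding partial_trace_def by (simp add: sum.distrib)
qed

text \<open>Although \<open>R\<^sub>k\<close> admits no trace, the partial traces of \<open>AB\<close> and \<open>BA\<close> up to a cut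
  agree modulo \<open>k\<close>: the square part below the cut contributes equally to both, and
  the parts crossing the cut consist of scalar \<open>k \<times> k\<close> blocks.\<close>

lemma partial_trace_commutator_dvd:
  assumes "0 < k" "inR A" "inR B" "scalar_across_cut k A N" "scalar_across_cut k B N"
  shows "int k dvd partial_trace (2 + k * N) (mmul A B) - partial_trace (2 + k * N) (mmul B A)"
proof -
  define M where "M = 2 + k * N"
  obtain U U' where U: "\<forall>a<M. \<forall>l\<ge>U. A a l = 0" and U': "\<forall>a<M. \<forall>l\<ge>U'. B a l = 0"
    using inR_rows_bounded assms(2,3) by metis
  define Q where "Q = U + U' + N"
  have "Q \<le> k * Q" using \<open>0 < k\<close> by simp
  then have T: "M \<le> 2 + k * Q" "U \<le> 2 + k * Q" "U' \<le> 2 + k * Q"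
    unfolding M_def Q_def by (simp_all add: algebra_simps)
  have "partial_trace M (mmul A B) - partial_trace M (mmul B A) =
      (\<Sum>a\<in>{1..<M}. \<Sum>l\<in>{M..<2 + k * Q}. A a l * B l a) -
      (\<Sum>a\<in>{1..<M}. \<Sum>l\<in>{M..<2 + k * Q}. B a l * A l a)"
    using partial_trace_mmul_split[of M "2 + k * Q" A B] partial_trace_mmul_split[of M "2 + k * Q" B A]
      U U' T sum.swap[of "\<lambda>a l. A a l * B l a" "{1..<M}" "{1..<M}"]
    by (simp add: M_def mult.commute)
  moreover have "N \<le> Q" unfolding Q_def by simp
  ultimately show ?thesis
    using cut_cross_sum_dvd[where A = A and B = B and Q = Q]
      cut_cross_sum_dvd[where A = B and B = A and Q = Q] assms(4,5)
    unfolding M_def by (simp add: dvd_diff)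
qed

lemma sum_partial_trace_eq_mone:
  assumes "(\<lambda>a b. \<Sum>l\<in>L. mmul (X l) (Y l) a b) = mone"
  shows "(\<Sum>l\<in>L. partial_trace M (mmul (X l) (Y l))) = int (M - 1)"
proof -
  have "(\<Sum>l\<in>L. partial_trace M (mmul (X l) (Y l))) = (\<Sum>a\<in>{1..<M}. \<Sum>l\<in>L. mmul (X l) (Y l) a a)"
    unfolding partial_trace_def by (rule sum.swap)
  also have "\<dots> = (\<Sum>a\<in>{1..<M}. mone a a)"
    using fun_cong[OF fun_cong[OF assms]] by simp
  also have "\<dots> = int (M - 1)" by (simp add: mone_def)
  finally show ?thesis .
qed

lemma mod_eq_of_free_iso:
  assumes k: "0 < k" and iso: "free_iso k m n"
  shows "m mod k = n mod k"
proof -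
  obtain X Y :: "nat \<Rightarrow> nat \<Rightarrow> imat" where
    X: "\<forall>i<m. \<forall>j<n. inRk k (X i j)" and Y: "\<forall>i<n. \<forall>j<m. inRk k (Y i j)" and
    XY: "\<forall>i<m. \<forall>j<m. (\<lambda>a b. \<Sum>l<n. mmul (X i l) (Y l j) a b) = (if i = j then mone else mzero)" and
    YX: "\<forall>i<n. \<forall>j<n. (\<lambda>a b. \<Sum>l<m. mmul (Y i l) (X l j) a b) = (if i = j then mone else mzero)"
    using iso unfolding free_iso_def by blast
  have "eventually (\<lambda>N. \<forall>(i, l)\<in>{..<m} \<times> {..<n}.
      scalar_across_cut k (X i l) N \<and> scalar_across_cut k (Y l i) N) sequentially"
    using X Y by (intro eventually_ball_finite ballI)
      (auto intro!: eventually_conj eventually_scalar_across_cut[OF k])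
  then obtain N where N: "\<forall>(i, l)\<in>{..<m} \<times> {..<n}.
      scalar_across_cut k (X i l) N \<and> scalar_across_cut k (Y l i) N"
    unfolding eventually_sequentially by blast
  define M where "M = 2 + k * N"
  have "(\<Sum>i<m. \<Sum>l<n. partial_trace M (mmul (X i l) (Y l i))) = int m * int (M - 1)"
    using XY by (simp add: sum_partial_trace_eq_mone)
  moreover have "(\<Sum>i<m. \<Sum>l<n. partial_trace M (mmul (Y l i) (X i l))) =
      (\<Sum>l<n. \<Sum>i<m. partial_trace M (mmul (Y l i) (X i l)))"
    by (rule sum.swap)
  moreover have "\<dots> = int n * int (M - 1)"
    using YX by (simp add: sum_partial_trace_eq_mone)
  moreover have "int k dvd
      (\<Sum>i<m. \<Sum>l<n. partial_trace M (mmul (X i l) (Y l i)) - partial_trace M (mmul (Y l i) (X i l)))"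
    using X Y N k unfolding M_def inRk_def
    by (intro dvd_sum partial_trace_commutator_dvd) auto
  ultimately have "int k dvd (int m - int n) * (1 + int k * int N)"
    unfolding M_def by (simp add: sum_subtractf left_diff_distrib)
  moreover have "(int m - int n) * (1 + int k * int N) = (int m - int n) + (int N * (int m - int n)) * int k"
    by (simp add: algebra_simps)
  ultimately have "int k dvd int m - int n"
    by (metis dvd_add_times_triv_right_iff)
  then show ?thesis
    by (metis mod_eq_dvd_iff of_nat_eq_iff of_nat_mod)
qed

theorem theorem3:
  fixes k m n :: nat
  assumes "0 < k" and "0 < m" and "0 < n"
  shows "free_iso k m n \<longleftrightarrow> m mod k = n mod k"
  using mod_eq_of_free_iso[OF assms(1)] free_iso_of_mod_eq[OF assms] by blast

end
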